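(* Consider the central arrangement in $\mathbb{R}^8$ (coordinates $l_{ijk}$, $i,j,k\in\{0,1\}$) of the six hyperplanes $\mathcal{L}_{1,0}=\{l_{000}+l_{011}-l_{001}-l_{010}=0\}$, $\mathcal{L}_{1,1}=\{l_{100}+l_{111}-l_{101}-l_{110}=0\}$, $\mathcal{L}_{2,0}=\{l_{000}+l_{101}-l_{001}-l_{100}=0\}$, $\mathcal{L}_{2,1}=\{l_{010}+l_{111}-l_{011}-l_{110}=0\}$, $\mathcal{L}_{3,0}=\{l_{000}+l_{110}-l_{010}-l_{100}=0\}$, $\mathcal{L}_{3,1}=\{l_{001}+l_{111}-l_{011}-l_{101}=0\}$. The complement of the union of these hyperplanes has exactly $46$ connected components (regions), and exactly $44$ of these regions are contained in the set $\{l\in\mathbb{R}^8:\ \exp(l)/\sum_{x}\exp(l_x)\in\mathcal{M}_{3,3}\}$, where $\exp$ is applied entrywise.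
   Context: $\Delta_7$ is the set of $2\times2\times2$ tensors with nonnegative entries summing to $1$. $\mathcal{M}_{3,3}$ is the set of $p\in\Delta_7$ that are a sum of three tensors $a\otimes b\otimes c$ (entries $a_ib_jc_k$) with $a,b,c\in\mathbb{R}^2_{\ge0}$. *)

theory Defs
  imports "HOL-Analysis.Analysis"
begin

text \<open>Index set {0,1}^3 encoded as bool triples: False = 0, True = 1.
  A 2x2x2 tensor is a function bool*bool*bool => real; a point l of R^8
  is a vector in real^(bool*bool*bool), with l_{ijk} = l $ (i,j,k).\<close>

type_synonym idx3 = "bool \<times> bool \<times> bool"

definition Delta7 :: "(idx3 \<Rightarrow> real) set" where
  "Delta7 = {p. (\<forall>x. 0 \<le> p x) \<and> (\<Sum>x\<in>UNIV. p x) = 1}"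

definition M33 :: "(idx3 \<Rightarrow> real) set" where
  "M33 = {p \<in> Delta7. \<exists>a b c :: nat \<Rightarrow> bool \<Rightarrow> real.
            (\<forall>r i. 0 \<le> a r i \<and> 0 \<le> b r i \<and> 0 \<le> c r i) \<and>
            (\<forall>i j k. p (i, j, k) = (\<Sum>r<3. a r i * b r j * c r k))}"

definition softmax :: "real ^ idx3 \<Rightarrow> (idx3 \<Rightarrow> real)" where
  "softmax l = (\<lambda>x. exp (l $ x) / (\<Sum>y\<in>UNIV. exp (l $ y)))"

definition L10 :: "real ^ idx3 \<Rightarrow> real" where
  "L10 l = l$(False,False,False) + l$(False,True,True) - l$(False,False,True) - l$(False,True,False)"
definition L11 :: "real ^ idx3 \<Rightarrow> real" where
  "L11 l = l$(True,False,False) + l$(True,True,True) - l$(True,False,True) - l$(True,True,False)"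
definition L20 :: "real ^ idx3 \<Rightarrow> real" where
  "L20 l = l$(False,False,False) + l$(True,False,True) - l$(False,False,True) - l$(True,False,False)"
definition L21 :: "real ^ idx3 \<Rightarrow> real" where
  "L21 l = l$(False,True,False) + l$(True,True,True) - l$(False,True,True) - l$(True,True,False)"
definition L30 :: "real ^ idx3 \<Rightarrow> real" where
  "L30 l = l$(False,False,False) + l$(True,True,False) - l$(False,True,False) - l$(True,False,False)"
definition L31 :: "real ^ idx3 \<Rightarrow> real" where
  "L31 l = l$(False,False,True) + l$(True,True,True) - l$(False,True,True) - l$(True,False,True)"

definition arr_complement :: "(real ^ idx3) set" where
  "arr_complement = {l. L10 l \<noteq> 0 \<and> L11 l \<noteq> 0 \<and> L20 l \<noteq> 0 \<and> L21 l \<noteq> 0 \<and>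
                        L30 l \<noteq> 0 \<and> L31 l \<noteq> 0}"

end

theory Submission
  imports Defs
begin

text \<open>
  The six forms satisfy L10 - L11 = L20 - L21 = L30 - L31, and this is the only obstruction to
  prescribing their signs: a sign pattern occurs iff no pair of forms is (+,-) while another pair
  is (-,+).  That leaves 2 * 3^3 - 2^3 = 46 patterns, each cutting out a nonempty open convex
  cell, and these cells are the regions.

  If the two forms of some pair have the same sign, the corresponding two 2x2 slices of
  exp(l) have determinants of the same sign, and then the tensor splits explicitly into three
  nonnegative rank-one terms.  Only the two patterns where every pair is (+,-), resp. every pair
  is (-,+), are left; they contain the points taking one value on the entries of one parity and a
  much smaller value on the others, and such a tensor has no nonnegative decomposition of length
  three: each of the four large entries needs its own rank-one term.
\<close>

section \<open>Nonnegative rank of 2x2x2 tensors\<close>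

definition nonneg_rank_le :: "nat \<Rightarrow> (idx3 \<Rightarrow> real) \<Rightarrow> bool" where
  "nonneg_rank_le n p \<longleftrightarrow> (\<exists>a b c :: nat \<Rightarrow> bool \<Rightarrow> real.
      (\<forall>r i. 0 \<le> a r i \<and> 0 \<le> b r i \<and> 0 \<le> c r i) \<and>
      (\<forall>i j k. p (i, j, k) = (\<Sum>r<n. a r i * b r j * c r k)))"

lemma M33_eq: "M33 = {p \<in> Delta7. nonneg_rank_le 3 p}"
  by (simp add: M33_def nonneg_rank_le_def)

lemma nonneg_rank_le_reindex:
  assumes "nonneg_rank_le n q"
  shows "nonneg_rank_le n (\<lambda>(i, j, k). q (f i, g j, h k))"
proof -
  obtain a b c where nn: "\<forall>r i. 0 \<le> a r i \<and> 0 \<le> b r i \<and> 0 \<le> c r i"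
    and q: "\<forall>i j k. q (i, j, k) = (\<Sum>r<n. a r i * b r j * c r k)"
    using assms unfolding nonneg_rank_le_def by blast
  show ?thesis
    unfolding nonneg_rank_le_def
    by (rule exI[of _ "\<lambda>r i. a r (f i)"], rule exI[of _ "\<lambda>r j. b r (g j)"],
        rule exI[of _ "\<lambda>r k. c r (h k)"]) (simp add: nn q)
qed

definition swap12 :: "idx3 \<Rightarrow> idx3" where "swap12 = (\<lambda>(i, j, k). (j, i, k))"
definition swap13 :: "idx3 \<Rightarrow> idx3" where "swap13 = (\<lambda>(i, j, k). (k, j, i))"

lemma swap12_swap12 [simp]: "swap12 (swap12 x) = x"
  and swap13_swap13 [simp]: "swap13 (swap13 x) = x"
  by (auto simp: swap12_def swap13_def split: prod.splits)

lemma nonneg_rank_le_swap12: "nonneg_rank_le n q \<Longrightarrow> nonneg_rank_le n (q \<circ> swap12)"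
  unfolding nonneg_rank_le_def swap12_def
  by (elim exE conjE, rule_tac x = b in exI, rule_tac x = a in exI, rule_tac x = c in exI)
     (auto simp: ac_simps)

lemma nonneg_rank_le_swap13: "nonneg_rank_le n q \<Longrightarrow> nonneg_rank_le n (q \<circ> swap13)"
  unfolding nonneg_rank_le_def swap13_def
  by (elim exE conjE, rule_tac x = c in exI, rule_tac x = b in exI, rule_tac x = a in exI)
     (auto simp: ac_simps)

lemma nonneg_rank_le_divide:
  assumes "nonneg_rank_le n q" "0 < z"
  shows "nonneg_rank_le n (\<lambda>x. q x / z)"
  using assms unfolding nonneg_rank_le_def
  by (elim exE conjE, rule_tac x = "\<lambda>r i. a r i / z" in exI, rule_tac x = b in exI,
      rule_tac x = c in exI) (auto simp: sum_divide_distrib)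

definition slice_det :: "(idx3 \<Rightarrow> real) \<Rightarrow> bool \<Rightarrow> real" where
  "slice_det q i = q (i, False, False) * q (i, True, True) - q (i, False, True) * q (i, True, False)"

text \<open>
  Each slice is the rank-one matrix through its (True,True) entry plus
  slice_det q i / q (i,True,True) at the (False,False) entry; the two corrections together form
  a single rank-one term.
\<close>

lemma nonneg_rank_le3_of_slice_dets_nonneg:
  assumes nonneg: "\<And>x. 0 \<le> q x"
    and pos: "\<And>i. 0 < q (i, True, True)"
    and det: "\<And>i. 0 \<le> slice_det q i"
  shows "nonneg_rank_le 3 q"
proof -
  define a where "a r i = (if r = (0::nat) then of_bool (\<not> i) else if r = 1 then of_bool i
      else slice_det q i / q (i, True, True))" for r i
  define b where "b r j = (if r < (2::nat) then (if j then 1 else q (r = 1, False, True) / q (r = 1, True, True))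
      else of_bool (\<not> j))" for r j
  define c where "c r k = (if r < (2::nat) then q (r = 1, True, k) else of_bool (\<not> k))" for r k
  have "\<forall>r i. 0 \<le> a r i \<and> 0 \<le> b r i \<and> 0 \<le> c r i"
    using nonneg pos det by (auto simp: a_def b_def c_def less_imp_le)
  moreover have "q (i, j, k) = (\<Sum>r<3. a r i * b r j * c r k)" for i j k
    using pos[of False] pos[of True]
    by (cases i; cases j; cases k)
       (simp_all add: eval_nat_numeral a_def b_def c_def slice_det_def field_simps)
  ultimately show ?thesis
    unfolding nonneg_rank_le_def by blast
qed

lemma nonneg_rank_le3_of_slice_dets_same_sign:
  assumes pos: "\<And>x. 0 < q x"
    and same_sign: "0 \<le> slice_det q False * slice_det q True"
  shows "nonneg_rank_le 3 q"
proof -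
  have "(\<forall>i. 0 \<le> slice_det q i) \<or> (\<forall>i. slice_det q i \<le> 0)"
    using same_sign by (auto simp: zero_le_mult_iff all_bool_eq)
  then show ?thesis
  proof
    assume "\<forall>i. 0 \<le> slice_det q i"
    then show ?thesis
      using pos by (intro nonneg_rank_le3_of_slice_dets_nonneg) (auto intro: less_imp_le)
  next
    assume dets: "\<forall>i. slice_det q i \<le> 0"
    define q' where "q' = (\<lambda>(i, j, k). q (i, j, \<not> k))"
    have "nonneg_rank_le 3 q'"
      using pos dets
      by (intro nonneg_rank_le3_of_slice_dets_nonneg)
         (auto simp: q'_def slice_det_def less_imp_le mult.commute)
    then have "nonneg_rank_le 3 (\<lambda>(i, j, k). q' (id i, id j, \<not> k))"
      by (rule nonneg_rank_le_reindex)
    moreover have "(\<lambda>(i, j, k). q' (id i, id j, \<not> k)) = q"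
      by (auto simp: q'_def)
    ultimately show ?thesis by simp
  qed
qed

fun parity :: "idx3 \<Rightarrow> bool" where
  "parity (i, j, k) = (i \<noteq> (j \<noteq> k))"

lemma card_parity_class: "card {x. parity x = b} = 4"
proof -
  have "{x. parity x = b} =
      {(b, False, False), (b, True, True), (\<not> b, False, True), (\<not> b, True, False)}"
    by (cases b) auto
  then show ?thesis by (cases b) simp_all
qed

definition rank_one :: "(bool \<Rightarrow> real) \<Rightarrow> (bool \<Rightarrow> real) \<Rightarrow> (bool \<Rightarrow> real) \<Rightarrow> idx3 \<Rightarrow> real" where
  "rank_one a b c = (\<lambda>(i, j, k). a i * b j * c k)"

text \<open>
  Two distinct entries of the same parity differ in exactly two coordinates; exchanging one of
  these moves both entries to the other parity without changing the product of the values.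
\<close>

lemma rank_one_parity_exchange:
  assumes "x \<noteq> y" "parity x = parity y"
  obtains x' y' where "parity x' \<noteq> parity x" "parity y' \<noteq> parity x"
    "rank_one a b c x * rank_one a b c y = rank_one a b c x' * rank_one a b c y'"
proof -
  obtain i j k i' j' k' where xy: "x = (i, j, k)" "y = (i', j', k')"
    by (metis prod_cases3)
  show ?thesis
  proof (cases "k = k'")
    case True
    with assms xy have "i' = (\<not> i)" "j' = (\<not> j)" by auto
    with xy True show ?thesis
      by (intro that[of "(i, j', k)" "(i', j, k')"]) (auto simp: rank_one_def ac_simps)
  next
    case False
    with assms xy show ?thesis
      by (intro that[of "(i, j, k')" "(i', j', k)"]) (auto simp: rank_one_def ac_simps)
  qed
qed

lemma not_nonneg_rank_le3_parity_tensor: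
  assumes large: "\<And>x. parity x = b \<Longrightarrow> p x = A"
    and small: "\<And>x. parity x \<noteq> b \<Longrightarrow> p x = B"
    and "0 \<le> B" "3 * B < A"
  shows "\<not> nonneg_rank_le 3 p"
proof
  assume "nonneg_rank_le 3 p"
  then obtain a bb c where nn: "\<forall>r i. 0 \<le> a r i \<and> 0 \<le> bb r i \<and> 0 \<le> c r i"
    and p: "\<forall>i j k. p (i, j, k) = (\<Sum>r<(3::nat). a r i * bb r j * c r k)"
    unfolding nonneg_rank_le_def by blast
  define T where "T r = rank_one (a r) (bb r) (c r)" for r
  have T_nonneg: "0 \<le> T r x" for r x
    using nn by (cases x) (simp add: T_def rank_one_def)
  have p_sum: "p x = T 0 x + T 1 x + T 2 x" for x
    using p by (cases x) (simp add: T_def rank_one_def eval_nat_numeral)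
  have T_small: "T r x \<le> B" if "r < 3" "parity x \<noteq> b" for r x
  proof -
    have "r = 0 \<or> r = 1 \<or> r = 2"
      using \<open>r < 3\<close> by auto
    then have "T r x \<le> T 0 x + T 1 x + T 2 x"
      using T_nonneg[of 0 x] T_nonneg[of 1 x] T_nonneg[of 2 x] by auto
    then show ?thesis
      using p_sum[of x] small[OF that(2)] by simp
  qed
  have T_large: "\<exists>r<3. A / 3 \<le> T r x" if x: "parity x = b" for x
  proof (rule ccontr)
    assume "\<not> ?thesis"
    then have less: "T r x < A / 3" if "r < 3" for r
      using that not_le by blast
    show False
      using p_sum[of x] large[OF x] less[of 0] less[of 1] less[of 2] by simp
  qed
  define \<rho> where "\<rho> x = (SOME r. r < 3 \<and> A / 3 \<le> T r x)" for x
  have \<rho>: "\<rho> x < 3" "A / 3 \<le> T (\<rho> x) x" if "parity x = b" for x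
    using someI_ex[OF T_large[OF that]] by (simp_all add: \<rho>_def)
  have "\<not> inj_on \<rho> {x. parity x = b}"
  proof
    assume "inj_on \<rho> {x. parity x = b}"
    then have "card {x. parity x = b} \<le> card {..<3::nat}"
      by (rule card_inj_on_le) (auto intro: \<rho>)
    then show False
      by (simp add: card_parity_class)
  qed
  then obtain x y where xy: "x \<noteq> y" "parity x = b" "parity y = b" and same_term: "\<rho> x = \<rho> y"
    unfolding inj_on_def mem_Collect_eq by blast
  then obtain x' y' where x'y': "parity x' \<noteq> b" "parity y' \<noteq> b"
    and exchange: "T (\<rho> x) x * T (\<rho> x) y = T (\<rho> x) x' * T (\<rho> x) y'"
    using rank_one_parity_exchange[of x y "a (\<rho> x)" "bb (\<rho> x)" "c (\<rho> x)"]
    unfolding T_def by metis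
  have "(A / 3) * (A / 3) \<le> T (\<rho> x) x * T (\<rho> x) y"
    using \<rho>[OF xy(2)] \<rho>[OF xy(3)] same_term \<open>3 * B < A\<close> \<open>0 \<le> B\<close>
    by (intro mult_mono) (auto simp: T_nonneg)
  also have "\<dots> \<le> B * B"
    unfolding exchange
    using T_small \<rho>[OF xy(2)] x'y' \<open>0 \<le> B\<close> by (intro mult_mono) (auto simp: T_nonneg)
  also have "\<dots> < (A / 3) * (A / 3)"
    using \<open>3 * B < A\<close> \<open>0 \<le> B\<close> by (intro mult_strict_mono) auto
  finally show False by simp
qed

section \<open>The tensor exp(l)\<close>

lemma exp_diff_mult_pos:
  fixes u v u' v' :: real
  assumes "0 < (u - v) * (u' - v')"
  shows "0 < (exp u - exp v) * (exp u' - exp v')"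
  using assms by (auto simp: zero_less_mult_iff)

lemma slice_det_exp:
  "slice_det (\<lambda>x. exp (l $ x)) i =
     exp (l $ (i, False, False) + l $ (i, True, True)) - exp (l $ (i, False, True) + l $ (i, True, False))"
  by (simp add: slice_det_def exp_add)

lemma nonneg_rank_le3_exp_mode1:
  assumes "0 < L10 l * L11 l"
  shows "nonneg_rank_le 3 (\<lambda>x. exp (l $ x))"
proof (rule nonneg_rank_le3_of_slice_dets_same_sign)
  show "0 \<le> slice_det (\<lambda>x. exp (l $ x)) False * slice_det (\<lambda>x. exp (l $ x)) True"
    unfolding slice_det_exp
    using assms by (intro less_imp_le exp_diff_mult_pos) (simp add: L10_def L11_def algebra_simps)
qed simp

definition reindex :: "(idx3 \<Rightarrow> idx3) \<Rightarrow> real ^ idx3 \<Rightarrow> real ^ idx3" where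
  "reindex \<sigma> l = (\<chi> x. l $ \<sigma> x)"

lemma exp_reindex: "(\<lambda>x. exp (reindex \<sigma> l $ x)) = (\<lambda>x. exp (l $ x)) \<circ> \<sigma>"
  by (simp add: reindex_def o_def)

lemma L2_eq_L1_swap12: "L20 l = L10 (reindex swap12 l)" "L21 l = L11 (reindex swap12 l)"
  by (simp_all add: L10_def L11_def L20_def L21_def reindex_def swap12_def)

lemma L3_eq_L1_swap13: "L30 l = L10 (reindex swap13 l)" "L31 l = L11 (reindex swap13 l)"
  by (simp_all add: L10_def L11_def L30_def L31_def reindex_def swap13_def algebra_simps)

lemma nonneg_rank_le3_exp_mode2:
  assumes "0 < L20 l * L21 l"
  shows "nonneg_rank_le 3 (\<lambda>x. exp (l $ x))"
proof -
  have "nonneg_rank_le 3 ((\<lambda>x. exp (l $ x)) \<circ> swap12)"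
    using nonneg_rank_le3_exp_mode1[of "reindex swap12 l"] assms
    by (simp add: L2_eq_L1_swap12 exp_reindex)
  then have "nonneg_rank_le 3 ((\<lambda>x. exp (l $ x)) \<circ> swap12 \<circ> swap12)"
    by (rule nonneg_rank_le_swap12)
  then show ?thesis by (simp add: o_def)
qed

lemma nonneg_rank_le3_exp_mode3:
  assumes "0 < L30 l * L31 l"
  shows "nonneg_rank_le 3 (\<lambda>x. exp (l $ x))"
proof -
  have "nonneg_rank_le 3 ((\<lambda>x. exp (l $ x)) \<circ> swap13)"
    using nonneg_rank_le3_exp_mode1[of "reindex swap13 l"] assms
    by (simp add: L3_eq_L1_swap13 exp_reindex)
  then have "nonneg_rank_le 3 ((\<lambda>x. exp (l $ x)) \<circ> swap13 \<circ> swap13)"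
    by (rule nonneg_rank_le_swap13)
  then show ?thesis by (simp add: o_def)
qed

lemma sum_exp_pos: "0 < (\<Sum>y\<in>UNIV. exp ((l :: real ^ idx3) $ y))"
  by (rule sum_pos) auto

lemma softmax_in_Delta7: "softmax l \<in> Delta7"
  using sum_exp_pos[of l]
  by (auto simp: Delta7_def softmax_def sum_divide_distrib[symmetric] less_imp_le)

lemma softmax_in_M33_iff: "softmax l \<in> M33 \<longleftrightarrow> nonneg_rank_le 3 (\<lambda>x. exp (l $ x))"
proof
  assume "softmax l \<in> M33"
  then have "nonneg_rank_le 3 (\<lambda>x. softmax l x * (\<Sum>y\<in>UNIV. exp (l $ y)))"
    using sum_exp_pos[of l] nonneg_rank_le_divide[of 3 "softmax l" "1 / (\<Sum>y\<in>UNIV. exp (l $ y))"]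
    by (simp add: M33_eq)
  then show "nonneg_rank_le 3 (\<lambda>x. exp (l $ x))"
    using sum_exp_pos[of l] by (simp add: softmax_def)
next
  assume "nonneg_rank_le 3 (\<lambda>x. exp (l $ x))"
  then show "softmax l \<in> M33"
    using sum_exp_pos[of l] softmax_in_Delta7[of l]
    by (simp add: M33_eq softmax_def nonneg_rank_le_divide)
qed

section \<open>Sign patterns and regions of the arrangement\<close>

type_synonym sign_pattern = "bool \<times> bool \<times> bool \<times> bool \<times> bool \<times> bool"

definition signs :: "real ^ idx3 \<Rightarrow> sign_pattern" where
  "signs l = (0 < L10 l, 0 < L11 l, 0 < L20 l, 0 < L21 l, 0 < L30 l, 0 < L31 l)"

definition cell :: "sign_pattern \<Rightarrow> (real ^ idx3) set" where
  "cell s = {l \<in> arr_complement. signs l = s}"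

fun consistent :: "sign_pattern \<Rightarrow> bool" where
  "consistent (a0, a1, b0, b1, c0, c1) \<longleftrightarrow>
     \<not> ((a0 \<and> \<not> a1 \<or> b0 \<and> \<not> b1 \<or> c0 \<and> \<not> c1) \<and> (\<not> a0 \<and> a1 \<or> \<not> b0 \<and> b1 \<or> \<not> c0 \<and> c1))"

fun has_equal_pair :: "sign_pattern \<Rightarrow> bool" where
  "has_equal_pair (a0, a1, b0, b1, c0, c1) \<longleftrightarrow> a0 = a1 \<or> b0 = b1 \<or> c0 = c1"

lemma card_consistent: "card {s. consistent s} = 46"
  by code_simp

lemma card_consistent_has_equal_pair: "card {s. consistent s \<and> has_equal_pair s} = 44"
  by code_simp

lemma consistent_without_equal_pair:
  "consistent s \<Longrightarrow> \<not> has_equal_pair s \<Longrightarrow>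
     s = (True, False, True, False, True, False) \<or> s = (False, True, False, True, False, True)"
  by (cases s) auto

lemma consistent_signs:
  assumes "l \<in> arr_complement"
  shows "consistent (signs l)"
proof -
  have "L10 l - L11 l = L20 l - L21 l" "L20 l - L21 l = L30 l - L31 l"
    by (simp_all add: L10_def L11_def L20_def L21_def L30_def L31_def)
  with assms show ?thesis
    by (auto simp: signs_def arr_complement_def)
qed

definition open_halfline :: "bool \<Rightarrow> real set" where
  "open_halfline b = (if b then {0<..} else {..<0})"

lemma cell_eq_Int_halfspaces:
  "cell (a0, a1, b0, b1, c0, c1) =
     L10 -` open_halfline a0 \<inter> L11 -` open_halfline a1 \<inter> L20 -` open_halfline b0 \<inter>
     L21 -` open_halfline b1 \<inter> L30 -` open_halfline c0 \<inter> L31 -` open_halfline c1"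
proof -
  have halfline: "x \<in> open_halfline b \<longleftrightarrow> x \<noteq> 0 \<and> (0 < x) = b" for x :: real and b
    by (cases b) (auto simp: open_halfline_def)
  show ?thesis
    by (auto simp: cell_def signs_def arr_complement_def halfline)
qed

lemma bounded_linear_forms:
  "bounded_linear L10" "bounded_linear L11" "bounded_linear L20"
  "bounded_linear L21" "bounded_linear L30" "bounded_linear L31"
  unfolding L10_def [abs_def] L11_def [abs_def] L20_def [abs_def] L21_def [abs_def]
    L30_def [abs_def] L31_def [abs_def]
  by (intro bounded_linear_add bounded_linear_sub bounded_linear_vec_nth)+

lemma open_convex_halfspace:
  assumes "bounded_linear L"
  shows "open (L -` open_halfline b)" "convex (L -` open_halfline b)"
proof -
  have "open (open_halfline b)" "convex (open_halfline b)"
    by (simp_all add: open_halfline_def)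
  then show "open (L -` open_halfline b)" "convex (L -` open_halfline b)"
    using assms
    by (auto intro: continuous_open_vimage linear_continuous_at convex_linear_vimage
        bounded_linear.linear)
qed

lemma open_cell: "open (cell s)"
  by (cases s) (simp add: cell_eq_Int_halfspaces open_Int open_convex_halfspace bounded_linear_forms)

lemma convex_cell: "convex (cell s)"
  by (cases s) (simp add: cell_eq_Int_halfspaces convex_Int open_convex_halfspace bounded_linear_forms)

text \<open>
  L11, L21, L31 are free coordinates of this point and every L_m0 - L_m1 equals t, so a
  consistent pattern is realised by choosing t with the sign of the unequal pairs.
\<close>

definition arrangement_point :: "real \<Rightarrow> real \<Rightarrow> real \<Rightarrow> real \<Rightarrow> real ^ idx3" where
  "arrangement_point t u v w = (\<chi> x.
     if x = (False, False, False) then t else if x = (False, True, True) then u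
     else if x = (True, False, True) then v else if x = (True, True, False) then w
     else if x = (True, True, True) then u + v + w else 0)"

lemma forms_arrangement_point:
  "L10 (arrangement_point t u v w) = t + u" "L11 (arrangement_point t u v w) = u"
  "L20 (arrangement_point t u v w) = t + v" "L21 (arrangement_point t u v w) = v"
  "L30 (arrangement_point t u v w) = t + w" "L31 (arrangement_point t u v w) = w"
  by (simp_all add: arrangement_point_def L10_def L11_def L20_def L21_def L30_def L31_def)

lemma cell_nonempty:
  assumes "consistent s"
  shows "cell s \<noteq> {}"
proof -
  obtain a0 a1 b0 b1 c0 c1 where s: "s = (a0, a1, b0, b1, c0, c1)"
    by (cases s)
  define t :: real where "t = (if a0 \<and> \<not> a1 \<or> b0 \<and> \<not> b1 \<or> c0 \<and> \<not> c1 then 2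
      else if \<not> a0 \<and> a1 \<or> \<not> b0 \<and> b1 \<or> \<not> c0 \<and> c1 then -2 else 0)"
  define coord :: "bool \<Rightarrow> bool \<Rightarrow> real" where
    "coord b0 b1 = (if b0 = b1 then (if b1 then 3 else -3) else (if b1 then 1 else -1))" for b0 b1
  have "arrangement_point t (coord a0 a1) (coord b0 b1) (coord c0 c1) \<in> cell s"
    using assms unfolding s cell_eq_Int_halfspaces
    by (simp add: forms_arrangement_point t_def coord_def open_halfline_def)
       (cases a0; cases a1; cases b0; cases b1; cases c0; cases c1; simp)
  then show ?thesis by auto
qed

lemma components_arr_complement: "components arr_complement = cell ` {s. consistent s}"
proof (rule components_open_unique)
  show "disjoint (cell ` {s. consistent s})"
    by (auto simp: disjoint_def cell_def)
  show "\<Union> (cell ` {s. consistent s}) = arr_complement"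
    using consistent_signs by (auto simp: cell_def)
  show "open X \<and> connected X \<and> X \<noteq> {}" if "X \<in> cell ` {s. consistent s}" for X
    using that open_cell cell_nonempty convex_connected[OF convex_cell] by auto
qed

lemma inj_on_cell: "inj_on cell {s. consistent s}"
proof (rule inj_onI)
  fix s s' assume "s \<in> {s. consistent s}" "cell s = cell s'"
  then obtain l where "l \<in> cell s" "l \<in> cell s'"
    using cell_nonempty by blast
  then show "s = s'" by (simp add: cell_def)
qed

section \<open>Which regions lie in the model\<close>

lemma cell_subset_model:
  assumes "has_equal_pair s"
  shows "cell s \<subseteq> {l. softmax l \<in> M33}"
proof
  fix l assume "l \<in> cell s"
  then have "(0 < L10 l) = (0 < L11 l) \<or> (0 < L20 l) = (0 < L21 l) \<or> (0 < L30 l) = (0 < L31 l)"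
    and "l \<in> arr_complement"
    using assms by (cases s; simp add: cell_def signs_def)+
  moreover have "0 < x * y" if "x \<noteq> 0" "y \<noteq> 0" "(0 < x) = (0 < y)" for x y :: real
    using that by (auto simp: zero_less_mult_iff)
  ultimately have "0 < L10 l * L11 l \<or> 0 < L20 l * L21 l \<or> 0 < L30 l * L31 l"
    by (auto simp: arr_complement_def)
  then have "nonneg_rank_le 3 (\<lambda>x. exp (l $ x))"
    using nonneg_rank_le3_exp_mode1 nonneg_rank_le3_exp_mode2 nonneg_rank_le3_exp_mode3 by blast
  then show "l \<in> {l. softmax l \<in> M33}"
    by (simp add: softmax_in_M33_iff)
qed

definition parity_point :: "bool \<Rightarrow> real ^ idx3" where
  "parity_point b = (\<chi> x. if parity x = b then 0 else -3)"

lemma softmax_parity_point_notin_M33: "softmax (parity_point b) \<notin> M33"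
proof -
  have "3 * exp (-3 :: real) < 1"
    using exp_ge_add_one_self[of 3] by (simp add: exp_minus field_simps)
  then have "\<not> nonneg_rank_le 3 (\<lambda>x. exp (parity_point b $ x))"
    by (intro not_nonneg_rank_le3_parity_tensor[where b = b]) (simp_all add: parity_point_def)
  then show ?thesis
    by (simp add: softmax_in_M33_iff)
qed

lemma parity_point_in_cell:
  "parity_point False \<in> cell (True, False, True, False, True, False)"
  "parity_point True \<in> cell (False, True, False, True, False, True)"
  by (simp_all add: cell_def signs_def arr_complement_def parity_point_def
      L10_def L11_def L20_def L21_def L30_def L31_def)

lemma regions_in_model:
  "{R \<in> components arr_complement. R \<subseteq> {l. softmax l \<in> M33}} =
     cell ` {s. consistent s \<and> has_equal_pair s}"
proof -
  have "\<not> cell s \<subseteq> {l. softmax l \<in> M33}" if "consistent s" "\<not> has_equal_pair s" for s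
    using consistent_without_equal_pair[OF that] parity_point_in_cell
      softmax_parity_point_notin_M33 by blast
  then show ?thesis
    unfolding components_arr_complement using cell_subset_model by blast
qed

theorem mainTheorem13:
  shows "card (components arr_complement) = 46 \<and>
         card {R \<in> components arr_complement. R \<subseteq> {l. softmax l \<in> M33}} = 44"
proof
  show "card (components arr_complement) = 46"
    using card_image[OF inj_on_cell] card_consistent
    by (simp add: components_arr_complement)
  have "inj_on cell {s. consistent s \<and> has_equal_pair s}"
    by (rule inj_on_subset[OF inj_on_cell]) auto
  then show "card {R \<in> components arr_complement. R \<subseteq> {l. softmax l \<in> M33}} = 44"
    unfolding regions_in_model using card_image card_consistent_has_equal_pair by metis
qed

end
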